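(* Fix integers $n_0\le m\le n\le L-3$. Let $\sigma\in\Omega_L$ be a configuration with exactly $nm+1$ spins equal to $0$ and all other spins equal to $-1$, such that $nm$ of the $0$-spins form an $n\times m$ rectangle $Q$ and the remaining $0$-spin sits at a site $z\notin Q$ whose unique nearest neighbour in $Q$ is a corner of $Q$ (so that exactly one $-1$-spin has two $0$-spins as nearest neighbours). Let $\sigma_-$ be obtained from $\sigma$ by flipping the spin at $z$ to $-1$, and $\sigma_+$ by flipping to $0$ the unique $-1$-spin having two $0$-spins as neighbours. Then there exists a constant $C_0$ (depending only on $h$) such that $$\big|p_\beta(\sigma,\sigma_-)-\tfrac12\big|\le C_0\,\delta_1(\beta),\qquad \big|p_\beta(\sigma,\sigma_+)-\tfrac12\big|\le C_0\,\delta_1(\beta),$$ where $\delta_1(\beta)=e^{-h\beta}+|\Lambda_L|^{1/2}e^{-(2-h)\beta}+|\Lambda_L|e^{-(4-h)\beta}$.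
   Context: Blume–Capel model. Fix $h\in(0,1)$ with $2/h\notin\mathbb Z$, $n_0=\lfloor 2/h\rfloor$. $\Lambda_L$ is the two-dimensional discrete torus of side $L$, $\Omega_L=\{-1,0,1\}^{\Lambda_L}$. Hamiltonian $\mathbb H(\sigma)=\sum(\sigma(y)-\sigma(x))^2-h\sum_x\sigma(x)$, first sum over unordered nearest-neighbour pairs. $\sigma^{x,\pm}$: replace $\sigma(x)$ by $\sigma(x)\pm1$ modulo $3$ in $\{-1,0,1\}$. Jump rates $R_\beta(\sigma,\sigma^{x,\pm})=\exp\{-\beta[\mathbb H(\sigma^{x,\pm})-\mathbb H(\sigma)]_+\}$, holding rate $\lambda_\beta(\sigma)=\sum_{x,\pm}R_\beta(\sigma,\sigma^{x,\pm})$, and jump probabilities $p_\beta(\sigma,\sigma')=R_\beta(\sigma,\sigma')/\lambda_\beta(\sigma)$. *)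

theory Defs
  imports Complex_Main
begin

type_synonym site = "nat \<times> nat"
type_synonym config = "site \<Rightarrow> int"

definition sites :: "nat \<Rightarrow> site set" where
  "sites L = {0..<L} \<times> {0..<L}"

definition right :: "nat \<Rightarrow> site \<Rightarrow> site" where
  "right L x = ((fst x + 1) mod L, snd x)"
definition left :: "nat \<Rightarrow> site \<Rightarrow> site" where
  "left L x = ((fst x + L - 1) mod L, snd x)"
definition up :: "nat \<Rightarrow> site \<Rightarrow> site" where
  "up L x = (fst x, (snd x + 1) mod L)"
definition down :: "nat \<Rightarrow> site \<Rightarrow> site" where
  "down L x = (fst x, (snd x + L - 1) mod L)"

definition nbrs :: "nat \<Rightarrow> site \<Rightarrow> site set" where
  "nbrs L x = {right L x, left L x, up L x, down L x}"

text \<open>Configuration space Omega_L (values outside the torus are irrelevant).\<close>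
definition Omega :: "nat \<Rightarrow> config set" where
  "Omega L = {\<sigma>. \<forall>x\<in>sites L. \<sigma> x \<in> {-1, 0, 1}}"

text \<open>Hamiltonian; each unordered nearest-neighbour pair is counted once
  via its right and up edges (L \<ge> 3).\<close>
definition H :: "nat \<Rightarrow> real \<Rightarrow> config \<Rightarrow> real" where
  "H L h \<sigma> = (\<Sum>x\<in>sites L. real_of_int ((\<sigma> (right L x) - \<sigma> x)^2 + (\<sigma> (up L x) - \<sigma> x)^2))
              - h * (\<Sum>x\<in>sites L. real_of_int (\<sigma> x))"

text \<open>sigma^{x,s}, s = 1 or -1: replace sigma(x) by sigma(x)+s modulo 3 in {-1,0,1}.\<close>
definition flip :: "config \<Rightarrow> site \<Rightarrow> int \<Rightarrow> config" where
  "flip \<sigma> x s = \<sigma>(x := ((\<sigma> x + s + 1) mod 3) - 1)"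

definition R :: "nat \<Rightarrow> real \<Rightarrow> real \<Rightarrow> config \<Rightarrow> config \<Rightarrow> real" where
  "R L h \<beta> \<sigma> \<sigma>' =
     (if \<exists>x\<in>sites L. \<exists>s\<in>{1, -1::int}. \<sigma>' = flip \<sigma> x s
      then exp (- \<beta> * max 0 (H L h \<sigma>' - H L h \<sigma>)) else 0)"

definition holding_rate :: "nat \<Rightarrow> real \<Rightarrow> real \<Rightarrow> config \<Rightarrow> real" where
  "holding_rate L h \<beta> \<sigma> = (\<Sum>x\<in>sites L. \<Sum>s\<in>{1, -1::int}. R L h \<beta> \<sigma> (flip \<sigma> x s))"

definition p :: "nat \<Rightarrow> real \<Rightarrow> real \<Rightarrow> config \<Rightarrow> config \<Rightarrow> real" where
  "p L h \<beta> \<sigma> \<sigma>' = R L h \<beta> \<sigma> \<sigma>' / holding_rate L h \<beta> \<sigma>"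

definition rect :: "nat \<Rightarrow> site \<Rightarrow> nat \<Rightarrow> nat \<Rightarrow> site set" where
  "rect L c w v = {((fst c + i) mod L, (snd c + j) mod L) | i j. i < w \<and> j < v}"

definition corners :: "nat \<Rightarrow> site \<Rightarrow> nat \<Rightarrow> nat \<Rightarrow> site set" where
  "corners L c w v = {((fst c + i) mod L, (snd c + j) mod L) | i j. i \<in> {0, w - 1} \<and> j \<in> {0, v - 1}}"

definition delta1 :: "nat \<Rightarrow> real \<Rightarrow> real \<Rightarrow> real" where
  "delta1 L h \<beta> = exp (- h * \<beta>) + sqrt (real (card (sites L))) * exp (- (2 - h) * \<beta>)
                   + real (card (sites L)) * exp (- (4 - h) * \<beta>)"

end

theory Submission
  imports Defs
begin

text \<open>In \<open>\<sigma>\<close> two single-spin flips cost no energy: the protruding \<open>0\<close>-spin at \<open>z\<close> may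
  drop to \<open>-1\<close>, and the \<open>-1\<close>-spin \<open>w\<close> touching both \<open>z\<close> and the rectangle may become \<open>0\<close>;
  both happen at rate \<open>1\<close>. The energy cost of any other flip depends only on the number of
  \<open>0\<close>-neighbours of its site; it is at least \<open>h\<close>, less than \<open>2 - h\<close> only at the four corners
  of the rectangle, and less than \<open>4 - h\<close> only on the \<open>O(L)\<close> sites in the rows and columns
  through its boundary. Hence the holding rate is \<open>2 + O(\<delta>\<^sub>1)\<close>, and both jump
  probabilities, being its reciprocal, are \<open>1/2 + O(\<delta>\<^sub>1)\<close>.\<close>

lemma mem_sites_iff: "x \<in> sites L \<longleftrightarrow> fst x < L \<and> snd x < L"
  by (cases x) (auto simp: sites_def)

lemma finite_sites [simp]: "finite (sites L)"
  by (simp add: sites_def)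

lemma card_sites: "card (sites L) = L * L"
  by (simp add: sites_def card_cartesian_product)

lemma succ_mod_eq: "(t::nat) < L \<Longrightarrow> (t + 1) mod L = (if t = L - 1 then 0 else t + 1)"
  by (cases "t = L - 1") (auto simp: Suc_diff_1)

lemma pred_mod_eq: "(t::nat) < L \<Longrightarrow> (t + L - 1) mod L = (if t = 0 then L - 1 else t - 1)"
proof (cases "t = 0")
  case False
  assume "t < L"
  then have "t + L - 1 = (t - 1) + L" using False by simp
  then have "(t + L - 1) mod L = (t - 1) mod L" by simp
  then show ?thesis using \<open>t < L\<close> False by simp
qed simp

lemma nbr_in_sites:
  assumes "x \<in> sites L"
  shows "right L x \<in> sites L" "left L x \<in> sites L" "up L x \<in> sites L" "down L x \<in> sites L"
  using assms by (auto simp: mem_sites_iff right_def left_def up_def down_def)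

lemma nbrs_subset_sites: "x \<in> sites L \<Longrightarrow> nbrs L x \<subseteq> sites L"
  using nbr_in_sites by (auto simp: nbrs_def)

lemma mod_succ_pred:
  assumes "(t::nat) < L" shows "((t + L - 1) mod L + 1) mod L = t"
proof -
  have lt: "(t + L - 1) mod L < L" using assms by simp
  show ?thesis unfolding succ_mod_eq[OF lt] pred_mod_eq[OF assms] using assms by auto
qed

lemma mod_pred_succ:
  assumes "(t::nat) < L" shows "((t + 1) mod L + L - 1) mod L = t"
proof -
  have lt: "(t + 1) mod L < L" using assms by simp
  show ?thesis unfolding pred_mod_eq[OF lt] succ_mod_eq[OF assms] using assms by auto
qed

lemma nbr_inverses:
  assumes "x \<in> sites L"
  shows "right L (left L x) = x" "left L (right L x) = x" "up L (down L x) = x" "down L (up L x) = x"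
  using assms mod_succ_pred mod_pred_succ by (simp_all add: mem_sites_iff right_def left_def up_def down_def)

lemma mod_steps_distinct:
  assumes "(t::nat) < L" "3 \<le> L"
  shows "(t + 1) mod L \<noteq> t" "(t + L - 1) mod L \<noteq> t" "(t + 1) mod L \<noteq> (t + L - 1) mod L"
  unfolding succ_mod_eq[OF assms(1)] pred_mod_eq[OF assms(1)] using assms by auto

lemma nbrs_distinct:
  assumes "x \<in> sites L" "3 \<le> L"
  shows "right L x \<noteq> x" "left L x \<noteq> x" "up L x \<noteq> x" "down L x \<noteq> x"
    "right L x \<noteq> left L x" "right L x \<noteq> up L x" "right L x \<noteq> down L x"
    "left L x \<noteq> up L x" "left L x \<noteq> down L x" "up L x \<noteq> down L x"
  using assms mod_steps_distinct[of "fst x" L] mod_steps_distinct[of "snd x" L]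
  by (auto simp: mem_sites_iff right_def left_def up_def down_def prod_eq_iff)

lemma diagonal_ne_self:
  assumes "x \<in> sites L" "3 \<le> L"
  shows "up L (left L x) \<noteq> x" "right L (down L x) \<noteq> x"
  using assms mod_steps_distinct[of "fst x" L] mod_steps_distinct[of "snd x" L]
  by (auto simp: mem_sites_iff right_def left_def up_def down_def prod_eq_iff)

lemma self_notin_nbrs: "x \<in> sites L \<Longrightarrow> 3 \<le> L \<Longrightarrow> x \<notin> nbrs L x"
  using nbrs_distinct[of x L] by (auto simp: nbrs_def)

lemma nbrs_sym: "x \<in> sites L \<Longrightarrow> z \<in> nbrs L x \<Longrightarrow> x \<in> nbrs L z"
  using nbr_inverses[of x L] by (auto simp: nbrs_def)

section \<open>Energy change and rate of a single-spin update\<close>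

definition bond_energy :: "nat \<Rightarrow> config \<Rightarrow> site \<Rightarrow> int" where
  "bond_energy L \<sigma> x = (\<sigma> (right L x) - \<sigma> x)^2 + (\<sigma> (up L x) - \<sigma> x)^2"

lemma H_eq_bond_sum:
  "H L h \<sigma> = (\<Sum>x\<in>sites L. real_of_int (bond_energy L \<sigma> x)) - h * (\<Sum>x\<in>sites L. real_of_int (\<sigma> x))"
  by (simp add: H_def bond_energy_def)

lemma bond_energy_update_other:
  assumes "y \<in> sites L" "3 \<le> L" "y \<notin> {x, left L x, down L x}"
  shows "bond_energy L (\<sigma>(x := v)) y = bond_energy L \<sigma> y"
proof -
  have "y = left L (right L y)" "y = down L (up L y)" using nbr_inverses[OF assms(1)] by simp_all
  then have "right L y \<noteq> x" "up L y \<noteq> x" using assms(3) by auto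
  then show ?thesis using assms(3) by (simp add: bond_energy_def)
qed

lemma H_update_diff:
  assumes x: "x \<in> sites L" and L: "3 \<le> L"
  shows "H L h (\<sigma>(x := v)) - H L h \<sigma> =
    real_of_int ((\<sigma> (right L x) - v)^2 - (\<sigma> (right L x) - \<sigma> x)^2
     + (\<sigma> (up L x) - v)^2 - (\<sigma> (up L x) - \<sigma> x)^2
     + (v - \<sigma> (left L x))^2 - (\<sigma> x - \<sigma> (left L x))^2
     + (v - \<sigma> (down L x))^2 - (\<sigma> x - \<sigma> (down L x))^2) - h * real_of_int (v - \<sigma> x)"
proof -
  let ?\<tau> = "\<sigma>(x := v)"
  define D where "D y = bond_energy L ?\<tau> y - bond_energy L \<sigma> y" for y
  note inv = nbr_inverses[OF x] and dist = nbrs_distinct[OF x L] diagonal_ne_self[OF x L]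
  have local: "{x, left L x, down L x} \<subseteq> sites L" using x nbr_in_sites[OF x] by auto
  have "(\<Sum>y\<in>sites L. D y) = (\<Sum>y\<in>{x, left L x, down L x}. D y)"
    by (rule sum.mono_neutral_right[OF finite_sites local])
       (auto simp: D_def bond_energy_update_other[OF _ L])
  also have "\<dots> = D x + D (left L x) + D (down L x)"
    using dist by (simp add: add.assoc)
  also have "\<dots> = (\<sigma> (right L x) - v)^2 - (\<sigma> (right L x) - \<sigma> x)^2
     + (\<sigma> (up L x) - v)^2 - (\<sigma> (up L x) - \<sigma> x)^2
     + (v - \<sigma> (left L x))^2 - (\<sigma> x - \<sigma> (left L x))^2
     + (v - \<sigma> (down L x))^2 - (\<sigma> x - \<sigma> (down L x))^2"
    using inv dist by (simp add: D_def bond_energy_def)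
  finally have bonds: "(\<Sum>y\<in>sites L. D y) = \<dots>" .
  have field: "(\<Sum>y\<in>sites L. real_of_int (?\<tau> y)) - (\<Sum>y\<in>sites L. real_of_int (\<sigma> y)) = real_of_int (v - \<sigma> x)"
    using x by (simp add: sum.remove sum_subtractf[symmetric] if_distrib cong: if_cong)
  have "H L h ?\<tau> - H L h \<sigma> = real_of_int (\<Sum>y\<in>sites L. D y)
      - h * ((\<Sum>y\<in>sites L. real_of_int (?\<tau> y)) - (\<Sum>y\<in>sites L. real_of_int (\<sigma> y)))"
    unfolding H_eq_bond_sum D_def by (simp add: sum_subtractf algebra_simps)
  then show ?thesis by (simp only: bonds field)
qed

definition zero_nbrs :: "nat \<Rightarrow> config \<Rightarrow> site \<Rightarrow> int" where
  "zero_nbrs L \<sigma> x = of_bool (\<sigma> (right L x) = 0) + of_bool (\<sigma> (left L x) = 0)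
     + of_bool (\<sigma> (up L x) = 0) + of_bool (\<sigma> (down L x) = 0)"

lemma card_filter_4:
  assumes "r \<noteq> l" "r \<noteq> u" "r \<noteq> d" "l \<noteq> u" "l \<noteq> d" "u \<noteq> d"
  shows "int (card {y \<in> {r, l, u, d}. P y}) = of_bool (P r) + of_bool (P l) + of_bool (P u) + of_bool (P d)"
proof -
  have "{y \<in> {r, l, u, d}. P y} = (if P r then {r} else {}) \<union> (if P l then {l} else {})
     \<union> (if P u then {u} else {}) \<union> (if P d then {d} else {})" by auto
  then show ?thesis
    using assms by (cases "P r"; cases "P l"; cases "P u"; cases "P d") (auto simp: card_insert_if)
qed

lemma card_zero_nbrs:
  assumes "x \<in> sites L" "3 \<le> L"
  shows "int (card {y \<in> nbrs L x. \<sigma> y = 0}) = zero_nbrs L \<sigma> x"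
  unfolding nbrs_def zero_nbrs_def by (rule card_filter_4) (use nbrs_distinct[OF assms] in auto)

lemma zero_nbrs_bounds: "0 \<le> zero_nbrs L \<sigma> x" "zero_nbrs L \<sigma> x \<le> 4"
  by (simp_all add: zero_nbrs_def)

lemma H_update_diff_zero_nbrs:
  assumes x: "x \<in> sites L" and L: "3 \<le> L" and nbr_vals: "\<forall>y\<in>nbrs L x. \<sigma> y \<in> {-1, 0}"
  shows "H L h (\<sigma>(x := v)) - H L h \<sigma> =
    real_of_int (4 * (v^2 - (\<sigma> x)^2) - 2 * (v - \<sigma> x) * (zero_nbrs L \<sigma> x - 4)) - h * real_of_int (v - \<sigma> x)"
  unfolding H_update_diff[OF x L]
  using nbr_vals by (auto simp: nbrs_def zero_nbrs_def algebra_simps power2_eq_square)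

lemma R_flip:
  assumes "x \<in> sites L" "s \<in> {1, -1}"
  shows "R L h \<beta> \<sigma> (flip \<sigma> x s) = exp (- \<beta> * max 0 (H L h (flip \<sigma> x s) - H L h \<sigma>))"
  using assms unfolding R_def by auto

lemma exp_neg_max_le: "0 < \<beta> \<Longrightarrow> t \<le> \<Delta> \<Longrightarrow> exp (- \<beta> * max 0 \<Delta>) \<le> exp (- t * (\<beta>::real))"
  by (simp add: mult.commute mult_left_mono)

lemma exp_neg_max_nonpos: "\<Delta> \<le> 0 \<Longrightarrow> exp (- \<beta> * max 0 (\<Delta>::real)) = 1"
  by (simp add: max_def)

lemma exp_barriers_ordered:
  assumes "h \<le> 1" "0 \<le> (\<beta>::real)"
  shows "exp (- (4 - h) * \<beta>) \<le> exp (- (2 - h) * \<beta>)" "exp (- (2 - h) * \<beta>) \<le> exp (- h * \<beta>)"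
proof -
  have "(h - 4) * \<beta> \<le> (h - 2) * \<beta>" "(h - 2) * \<beta> \<le> (- h) * \<beta>"
    using assms by (intro mult_right_mono; simp)+
  then show "exp (- (4 - h) * \<beta>) \<le> exp (- (2 - h) * \<beta>)" "exp (- (2 - h) * \<beta>) \<le> exp (- h * \<beta>)"
    by simp_all
qed

lemma abs_inverse_minus_half_le:
  assumes "2 \<le> (S::real)" shows "\<bar>1 / S - 1 / 2\<bar> \<le> (S - 2) / 4"
proof -
  have "\<bar>1 / S - 1 / 2\<bar> = (S - 2) / (2 * S)" using assms by (simp add: abs_if field_simps)
  also have "\<dots> \<le> (S - 2) / 4" using assms by (intro divide_left_mono) auto
  finally show ?thesis .
qed

section \<open>Coordinates relative to a rectangle\<close>

text \<open>Shifted by one, so that a side of length \<open>a\<close> starting at \<open>c0\<close> occupies \<open>1..a\<close> and,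
  for \<open>a + 2 < L\<close>, the adjacent layers \<open>0\<close> and \<open>a + 1\<close> do not wrap around the torus.\<close>
definition rel_coord :: "nat \<Rightarrow> nat \<Rightarrow> nat \<Rightarrow> int" where
  "rel_coord L c0 t = (int t + (1 - int c0)) mod int L"

lemma rel_coord_range: "0 < L \<Longrightarrow> 0 \<le> rel_coord L c0 t \<and> rel_coord L c0 t < int L"
  by (simp add: rel_coord_def)

lemma rel_coord_succ: "rel_coord L c0 ((t + 1) mod L) = (rel_coord L c0 t + 1) mod int L"
  unfolding rel_coord_def of_nat_mod of_nat_add of_nat_1 mod_add_left_eq by (simp add: algebra_simps)

lemma rel_coord_pred:
  assumes "0 < L" shows "rel_coord L c0 ((t + L - 1) mod L) = (rel_coord L c0 t - 1) mod int L"
proof -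
  have shift: "int (t + L - 1) + (1 - int c0) = (int t - int c0) + int L"
    using assms by (simp add: of_nat_diff)
  have "rel_coord L c0 ((t + L - 1) mod L) = (int t - int c0) mod int L"
    unfolding rel_coord_def of_nat_mod mod_add_left_eq shift by (rule mod_add_self2)
  also have "\<dots> = (rel_coord L c0 t - 1) mod int L"
    unfolding rel_coord_def mod_diff_left_eq by (simp add: algebra_simps)
  finally show ?thesis .
qed

lemma rel_coord_shift: "rel_coord L c0 ((c0 + i) mod L) = (int i + 1) mod int L"
  unfolding rel_coord_def of_nat_mod mod_add_left_eq by (simp add: algebra_simps)

lemma rel_coord_inj:
  assumes "t < L" "t' < L" "rel_coord L c0 t = rel_coord L c0 t'"
  shows "t = t'"
proof -
  have "(rel_coord L c0 t + (int c0 - 1)) mod int L = int t mod int L" for t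
    unfolding rel_coord_def mod_add_left_eq by (simp add: algebra_simps)
  then have "int t mod int L = int t' mod int L" using assms(3) by metis
  then show ?thesis using assms(1,2) by simp
qed

lemma rel_coord_inverse:
  assumes "t < L" "1 \<le> rel_coord L c0 t"
  shows "(c0 + nat (rel_coord L c0 t - 1)) mod L = t"
proof -
  have "int ((c0 + nat (rel_coord L c0 t - 1)) mod L) = (rel_coord L c0 t + (int c0 - 1)) mod int L"
    using assms(2) by (simp add: of_nat_mod algebra_simps)
  also have "\<dots> = int t" using assms(1) unfolding rel_coord_def mod_add_left_eq by (simp add: algebra_simps)
  finally show ?thesis by simp
qed

lemma sites_eqI_rel_coord:
  assumes "x \<in> sites L" "x' \<in> sites L"
    "rel_coord L c1 (fst x) = rel_coord L c1 (fst x')" "rel_coord L c2 (snd x) = rel_coord L c2 (snd x')"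
  shows "x = x'"
  using assms rel_coord_inj by (metis prod.expand mem_sites_iff)

definition in_box :: "int \<Rightarrow> int \<Rightarrow> int \<Rightarrow> int \<Rightarrow> bool" where
  "in_box a b i j \<longleftrightarrow> 1 \<le> i \<and> i \<le> a \<and> 1 \<le> j \<and> j \<le> b"

lemma mem_rect_iff_rel_coord:
  assumes "x \<in> sites L" "a < L" "b < L"
  shows "x \<in> rect L c a b \<longleftrightarrow> in_box a b (rel_coord L (fst c) (fst x)) (rel_coord L (snd c) (snd x))"
proof
  assume "x \<in> rect L c a b"
  then obtain i j where "x = ((fst c + i) mod L, (snd c + j) mod L)" "i < a" "j < b"
    by (auto simp: rect_def)
  then show "in_box a b (rel_coord L (fst c) (fst x)) (rel_coord L (snd c) (snd x))"
    using assms(2,3) by (simp add: rel_coord_shift in_box_def)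
next
  assume "in_box a b (rel_coord L (fst c) (fst x)) (rel_coord L (snd c) (snd x))"
  then have box: "1 \<le> rel_coord L (fst c) (fst x)" "rel_coord L (fst c) (fst x) \<le> int a"
    "1 \<le> rel_coord L (snd c) (snd x)" "rel_coord L (snd c) (snd x) \<le> int b"
    by (simp_all add: in_box_def)
  have "x = ((fst c + nat (rel_coord L (fst c) (fst x) - 1)) mod L, (snd c + nat (rel_coord L (snd c) (snd x) - 1)) mod L)"
    using assms(1) box by (simp add: prod_eq_iff mem_sites_iff rel_coord_inverse)
  moreover have "nat (rel_coord L (fst c) (fst x) - 1) < a" "nat (rel_coord L (snd c) (snd x) - 1) < b"
    using box by auto
  ultimately show "x \<in> rect L c a b" unfolding rect_def by blast
qed

lemma rel_coord_corners:
  assumes "y \<in> corners L c a b" "1 \<le> a" "a < L" "1 \<le> b" "b < L"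
  shows "rel_coord L (fst c) (fst y) \<in> {1, int a} \<and> rel_coord L (snd c) (snd y) \<in> {1, int b}"
proof -
  obtain i j where "y = ((fst c + i) mod L, (snd c + j) mod L)" "i \<in> {0, a - 1}" "j \<in> {0, b - 1}"
    using assms(1) by (auto simp: corners_def)
  then show ?thesis using assms by (auto simp: rel_coord_shift of_nat_diff)
qed

lemma card_column_strip:
  assumes "finite K"
  shows "card {x \<in> sites L. rel_coord L c0 (fst x) \<in> K} \<le> card K * L"
proof -
  have "card {x \<in> sites L. rel_coord L c0 (fst x) \<in> K} \<le> card (K \<times> {0..<L})"
  proof (rule card_inj_on_le[where f = "\<lambda>x. (rel_coord L c0 (fst x), snd x)"])
    show "inj_on (\<lambda>x. (rel_coord L c0 (fst x), snd x)) {x \<in> sites L. rel_coord L c0 (fst x) \<in> K}"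
      by (auto simp: inj_on_def mem_sites_iff prod_eq_iff intro: rel_coord_inj)
  qed (use assms in \<open>auto simp: mem_sites_iff\<close>)
  then show ?thesis by (simp add: card_cartesian_product)
qed

lemma card_row_strip:
  assumes "finite K"
  shows "card {x \<in> sites L. rel_coord L c0 (snd x) \<in> K} \<le> card K * L"
proof -
  have "card {x \<in> sites L. rel_coord L c0 (snd x) \<in> K} \<le> card ({0..<L} \<times> K)"
  proof (rule card_inj_on_le[where f = "\<lambda>x. (fst x, rel_coord L c0 (snd x))"])
    show "inj_on (\<lambda>x. (fst x, rel_coord L c0 (snd x))) {x \<in> sites L. rel_coord L c0 (snd x) \<in> K}"
      by (auto simp: inj_on_def mem_sites_iff prod_eq_iff intro: rel_coord_inj)
  qed (use assms in \<open>auto simp: mem_sites_iff\<close>)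
  then show ?thesis by (simp add: card_cartesian_product mult.commute)
qed

definition cyc_succ :: "int \<Rightarrow> int \<Rightarrow> int" where
  "cyc_succ L i = (if i = L - 1 then 0 else i + 1)"

definition cyc_pred :: "int \<Rightarrow> int \<Rightarrow> int" where
  "cyc_pred L i = (if i = 0 then L - 1 else i - 1)"

lemma cyc_succ_eq_mod: "0 \<le> i \<Longrightarrow> i < L \<Longrightarrow> (i + 1) mod L = cyc_succ L i"
  by (auto simp: cyc_succ_def)

lemma cyc_pred_eq_mod: "0 \<le> i \<Longrightarrow> i < L \<Longrightarrow> (i - 1) mod L = cyc_pred L i"
  by (auto simp: cyc_pred_def zmod_minus1)

definition box_nbrs :: "int \<Rightarrow> int \<Rightarrow> int \<Rightarrow> int \<Rightarrow> int \<Rightarrow> int" where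
  "box_nbrs L a b i j = of_bool (in_box a b (cyc_succ L i) j) + of_bool (in_box a b (cyc_pred L i) j)
     + of_bool (in_box a b i (cyc_succ L j)) + of_bool (in_box a b i (cyc_pred L j))"

definition box_shell :: "int \<Rightarrow> int \<Rightarrow> int \<Rightarrow> int \<Rightarrow> bool" where
  "box_shell a b i j \<longleftrightarrow> (1 \<le> i \<and> i \<le> a \<and> (j = 0 \<or> j = b + 1)) \<or> (1 \<le> j \<and> j \<le> b \<and> (i = 0 \<or> i = a + 1))"

definition cyc_adj :: "int \<Rightarrow> int \<Rightarrow> int \<Rightarrow> int \<Rightarrow> int \<Rightarrow> bool" where
  "cyc_adj L i j i' j' \<longleftrightarrow> (i' = cyc_succ L i \<and> j' = j) \<or> (i' = cyc_pred L i \<and> j' = j)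
     \<or> (i' = i \<and> j' = cyc_succ L j) \<or> (i' = i \<and> j' = cyc_pred L j)"

context
  fixes L a b i j :: int
  assumes ranges: "0 \<le> i" "i < L" "0 \<le> j" "j < L" "2 \<le> a" "2 \<le> b" "a + 3 \<le> L" "b + 3 \<le> L"
begin

lemma in_box_nbrs_iff:
  "in_box a b (cyc_succ L i) j \<longleftrightarrow> 0 \<le> i \<and> i \<le> a - 1 \<and> 1 \<le> j \<and> j \<le> b"
  "in_box a b (cyc_pred L i) j \<longleftrightarrow> 2 \<le> i \<and> i \<le> a + 1 \<and> 1 \<le> j \<and> j \<le> b"
  "in_box a b i (cyc_succ L j) \<longleftrightarrow> 1 \<le> i \<and> i \<le> a \<and> 0 \<le> j \<and> j \<le> b - 1"
  "in_box a b i (cyc_pred L j) \<longleftrightarrow> 1 \<le> i \<and> i \<le> a \<and> 2 \<le> j \<and> j \<le> b + 1"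
  using ranges by (auto simp: in_box_def cyc_succ_def cyc_pred_def)

lemma box_nbrs_outside_le_1: "\<not> in_box a b i j \<Longrightarrow> box_nbrs L a b i j \<le> 1"
  unfolding box_nbrs_def in_box_nbrs_iff using ranges by (auto simp: in_box_def of_bool_def)

lemma box_nbrs_outside_pos_imp_shell: "\<not> in_box a b i j \<Longrightarrow> 1 \<le> box_nbrs L a b i j \<Longrightarrow> box_shell a b i j"
  unfolding box_nbrs_def in_box_nbrs_iff using ranges by (auto simp: in_box_def box_shell_def of_bool_def split: if_splits)

lemma box_nbrs_far_eq_0:
  "\<not> in_box a b i j \<Longrightarrow> i \<notin> {0, a + 1} \<Longrightarrow> j \<notin> {0, b + 1} \<Longrightarrow> box_nbrs L a b i j = 0"
  unfolding box_nbrs_def in_box_nbrs_iff using ranges by (auto simp: in_box_def of_bool_def)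

lemma box_nbrs_inside_ge_2: "in_box a b i j \<Longrightarrow> 2 \<le> box_nbrs L a b i j"
  unfolding box_nbrs_def in_box_nbrs_iff using ranges by (auto simp: in_box_def of_bool_def)

lemma box_nbrs_inside_ge_3:
  "in_box a b i j \<Longrightarrow> i \<notin> {1, a} \<or> j \<notin> {1, b} \<Longrightarrow> 3 \<le> box_nbrs L a b i j"
  unfolding box_nbrs_def in_box_nbrs_iff using ranges by (auto simp: in_box_def of_bool_def)

lemma box_nbrs_inside_eq_4:
  "in_box a b i j \<Longrightarrow> i \<notin> {1, a} \<Longrightarrow> j \<notin> {1, b} \<Longrightarrow> box_nbrs L a b i j = 4"
  unfolding box_nbrs_def in_box_nbrs_iff using ranges by (auto simp: in_box_def of_bool_def)

end

lemma shell_nbr_of_corner_nbr_unique: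
  fixes L a b iz jz ix jx ix' jx' :: int
  assumes ranges: "2 \<le> a" "2 \<le> b" "a + 3 \<le> L" "b + 3 \<le> L"
    "0 \<le> iz" "iz < L" "0 \<le> jz" "jz < L"
    and z: "\<not> in_box a b iz jz" "iy \<in> {1, a}" "jy \<in> {1, b}" "cyc_adj L iz jz iy jy"
    and x: "box_shell a b ix jx" "cyc_adj L ix jx iz jz"
    and x': "box_shell a b ix' jx'" "cyc_adj L ix' jx' iz jz"
  shows "ix = ix' \<and> jx = jx'"
proof -
  have "(iz = 0 \<or> iz = a + 1) \<and> (jz = 1 \<or> jz = b) \<or> (jz = 0 \<or> jz = b + 1) \<and> (iz = 1 \<or> iz = a)"
    using ranges z unfolding in_box_def cyc_adj_def cyc_succ_def cyc_pred_def insert_iff empty_iff by smt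
  then show ?thesis
    using ranges x x' unfolding box_shell_def cyc_adj_def cyc_succ_def cyc_pred_def by smt
qed

section \<open>The droplet configuration\<close>

locale droplet =
  fixes L a b :: nat and c z y w :: site and \<sigma> :: config
  assumes box_size: "2 \<le> a" "2 \<le> b" "a + 3 \<le> L" "b + 3 \<le> L"
    and z: "z \<in> sites L" "z \<notin> rect L c a b"
    and \<sigma>_on_sites: "\<forall>x\<in>sites L. \<sigma> x = (if x \<in> rect L c a b \<or> x = z then 0 else -1)"
    and corner_nbr: "nbrs L z \<inter> rect L c a b = {y}" "y \<in> corners L c a b"
    and w: "w \<in> sites L" "\<sigma> w = -1" "card {y \<in> nbrs L w. \<sigma> y = 0} = 2"
begin

abbreviation hc :: "site \<Rightarrow> int" where "hc x \<equiv> rel_coord L (fst c) (fst x)"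
abbreviation vc :: "site \<Rightarrow> int" where "vc x \<equiv> rel_coord L (snd c) (snd x)"
abbreviation inside :: "site \<Rightarrow> bool" where "inside x \<equiv> in_box (int a) (int b) (hc x) (vc x)"
abbreviation box_nbrs_at :: "site \<Rightarrow> int" where "box_nbrs_at x \<equiv> box_nbrs (int L) (int a) (int b) (hc x) (vc x)"

lemma L_ge_3: "3 \<le> L"
  using box_size by simp

lemma coord_ranges: "0 \<le> hc x" "hc x < int L" "0 \<le> vc x" "vc x < int L"
  using rel_coord_range[of L] L_ge_3 by auto

lemma box_ranges: "2 \<le> int a" "2 \<le> int b" "int a + 3 \<le> int L" "int b + 3 \<le> int L"
  using box_size by auto

lemmas box_geometry = coord_ranges box_ranges

lemma mem_rect_iff_inside: "x \<in> sites L \<Longrightarrow> x \<in> rect L c a b \<longleftrightarrow> inside x"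
  using mem_rect_iff_rel_coord[of x L a b c] box_size by simp

lemma \<sigma>_eq: "x \<in> sites L \<Longrightarrow> \<sigma> x = (if inside x \<or> x = z then 0 else -1)"
  using \<sigma>_on_sites mem_rect_iff_inside by auto

lemma \<sigma>_nbr_values:
  assumes "x \<in> sites L" shows "\<forall>y\<in>nbrs L x. \<sigma> y \<in> {-1, 0}"
proof
  fix y assume "y \<in> nbrs L x"
  then have "y \<in> sites L" using nbrs_subset_sites[OF assms] by blast
  then show "\<sigma> y \<in> {-1, 0}" by (simp add: \<sigma>_eq)
qed

lemma coords_of_nbrs:
  assumes "x \<in> sites L"
  shows "hc (right L x) = cyc_succ L (hc x)" "vc (right L x) = vc x"
    "hc (left L x) = cyc_pred L (hc x)" "vc (left L x) = vc x"
    "hc (up L x) = hc x" "vc (up L x) = cyc_succ L (vc x)"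
    "hc (down L x) = hc x" "vc (down L x) = cyc_pred L (vc x)"
  using rel_coord_succ rel_coord_pred L_ge_3 coord_ranges[of x]
  by (simp_all add: right_def left_def up_def down_def cyc_succ_eq_mod cyc_pred_eq_mod)

lemma sites_eqI: "x \<in> sites L \<Longrightarrow> x' \<in> sites L \<Longrightarrow> hc x = hc x' \<Longrightarrow> vc x = vc x' \<Longrightarrow> x = x'"
  by (rule sites_eqI_rel_coord)

lemma cyc_adj_of_nbr:
  assumes "x \<in> sites L" "x' \<in> nbrs L x" shows "cyc_adj L (hc x) (vc x) (hc x') (vc x')"
  using assms(2) coords_of_nbrs[OF assms(1)] unfolding nbrs_def cyc_adj_def by auto

lemma zero_nbrs_between:
  assumes x: "x \<in> sites L"
  shows "box_nbrs_at x \<le> zero_nbrs L \<sigma> x" "zero_nbrs L \<sigma> x \<le> box_nbrs_at x + of_bool (z \<in> nbrs L x)"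
proof -
  have zn: "zero_nbrs L \<sigma> x = of_bool (inside (right L x) \<or> right L x = z) + of_bool (inside (left L x) \<or> left L x = z)
     + of_bool (inside (up L x) \<or> up L x = z) + of_bool (inside (down L x) \<or> down L x = z)"
    using nbr_in_sites[OF x] by (simp add: zero_nbrs_def \<sigma>_eq)
  have bn: "box_nbrs_at x = of_bool (inside (right L x)) + of_bool (inside (left L x))
     + of_bool (inside (up L x)) + of_bool (inside (down L x))"
    using coords_of_nbrs[OF x] by (simp add: box_nbrs_def)
  show "box_nbrs_at x \<le> zero_nbrs L \<sigma> x"
    unfolding zn bn by (intro add_mono) auto
  show "zero_nbrs L \<sigma> x \<le> box_nbrs_at x + of_bool (z \<in> nbrs L x)"
    using nbrs_distinct[OF x L_ge_3] unfolding zn bn by (auto simp: nbrs_def of_bool_def)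
qed

lemma z_not_inside: "\<not> inside z"
  using mem_rect_iff_inside z by blast

lemma y_facts: "y \<in> nbrs L z" "inside y" "hc y \<in> {1, int a}" "vc y \<in> {1, int b}"
proof -
  show y: "y \<in> nbrs L z" using corner_nbr(1) by auto
  then have "y \<in> sites L" using nbrs_subset_sites z(1) by blast
  then show "inside y" using corner_nbr(1) mem_rect_iff_inside[of y] by auto
  show "hc y \<in> {1, int a}" "vc y \<in> {1, int b}" using rel_coord_corners[OF corner_nbr(2)] box_size by auto
qed

lemma zero_nbrs_z: "zero_nbrs L \<sigma> z = 1"
proof -
  have "\<sigma> x = 0 \<longleftrightarrow> x = y" if "x \<in> nbrs L z" for x
  proof -
    have "x \<in> sites L" "x \<noteq> z" using that nbrs_subset_sites[OF z(1)] self_notin_nbrs[OF z(1) L_ge_3] by auto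
    then show ?thesis using corner_nbr(1) that \<sigma>_on_sites by auto
  qed
  then show ?thesis
    using y_facts(1) nbrs_distinct[OF z(1) L_ge_3] by (auto simp: zero_nbrs_def nbrs_def)
qed

lemma w_facts: "\<not> inside w" "w \<noteq> z" "zero_nbrs L \<sigma> w = 2" "z \<in> nbrs L w" "box_shell a b (hc w) (vc w)"
proof -
  show nw: "\<not> inside w" "w \<noteq> z" using \<sigma>_eq[OF w(1)] w(2) by (auto split: if_splits)
  show zw: "zero_nbrs L \<sigma> w = 2" using card_zero_nbrs[OF w(1) L_ge_3, of \<sigma>] w(3) by simp
  have "box_nbrs_at w \<le> 1" using box_nbrs_outside_le_1[OF box_geometry] nw by simp
  then have "z \<in> nbrs L w" "1 \<le> box_nbrs_at w"
    using zero_nbrs_between[OF w(1)] zw by (cases "z \<in> nbrs L w"; simp)+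
  then show "z \<in> nbrs L w" "box_shell a b (hc w) (vc w)"
    using box_nbrs_outside_pos_imp_shell[OF box_geometry] nw by auto
qed

lemma zero_nbrs_outside:
  assumes x: "x \<in> sites L" "\<not> inside x" "x \<noteq> w"
  shows "zero_nbrs L \<sigma> x \<le> 1"
proof (cases "z \<in> nbrs L x \<and> 1 \<le> box_nbrs_at x")
  case True
  \<comment> \<open>a site touching both \<open>z\<close> and the rectangle is unique, and \<open>w\<close> is one\<close>
  then have "box_shell a b (hc x) (vc x)" "cyc_adj L (hc x) (vc x) (hc z) (vc z)"
    using box_nbrs_outside_pos_imp_shell[OF box_geometry] x(2) cyc_adj_of_nbr[OF x(1)] by auto
  moreover have "cyc_adj L (hc w) (vc w) (hc z) (vc z)" using cyc_adj_of_nbr[OF w(1)] w_facts(4) .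
  moreover have "cyc_adj L (hc z) (vc z) (hc y) (vc y)" using cyc_adj_of_nbr[OF z(1) y_facts(1)] .
  ultimately have "x = w"
    using shell_nbr_of_corner_nbr_unique[OF box_ranges coord_ranges[of z] z_not_inside y_facts(3,4)]
      w_facts(5) sites_eqI[OF x(1) w(1)] by blast
  with x(3) show ?thesis ..
next
  case False
  then show ?thesis
    using zero_nbrs_between[OF x(1)] box_nbrs_outside_le_1[OF box_geometry x(2)]
    by (cases "z \<in> nbrs L x") auto
qed

lemma zero_nbrs_far:
  assumes "x \<in> sites L" "\<not> inside x" "hc x \<notin> {0, int a + 1}" "vc x \<notin> {0, int b + 1}" "x \<notin> nbrs L z"
  shows "zero_nbrs L \<sigma> x = 0"
proof -
  have "z \<notin> nbrs L x" using nbrs_sym[OF assms(1), of z] assms(5) by blast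
  then show ?thesis
    using zero_nbrs_between[OF assms(1)] box_nbrs_far_eq_0[OF box_geometry assms(2-4)] zero_nbrs_bounds[of L \<sigma> x]
    by simp
qed

lemma zero_nbrs_inside:
  assumes "x \<in> sites L" "inside x"
  shows "2 \<le> zero_nbrs L \<sigma> x"
    and "hc x \<notin> {1, int a} \<or> vc x \<notin> {1, int b} \<Longrightarrow> 3 \<le> zero_nbrs L \<sigma> x"
    and "hc x \<notin> {1, int a} \<Longrightarrow> vc x \<notin> {1, int b} \<Longrightarrow> zero_nbrs L \<sigma> x = 4"
  using zero_nbrs_between(1)[OF assms(1)] zero_nbrs_bounds[of L \<sigma> x] assms(2)
    box_nbrs_inside_ge_2[OF box_geometry] box_nbrs_inside_ge_3[OF box_geometry]
    box_nbrs_inside_eq_4[OF box_geometry]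
  by fastforce+


definition corner_sites :: "site set" where
  "corner_sites = {x \<in> sites L. hc x \<in> {1, int a} \<and> vc x \<in> {1, int b}}"

definition border_sites :: "site set" where
  "border_sites = {x \<in> sites L. hc x \<in> {0, 1, int a, int a + 1} \<or> vc x \<in> {0, 1, int b, int b + 1}
     \<or> x \<in> nbrs L z}"

lemma corner_sites_subset: "corner_sites \<subseteq> sites L"
  by (auto simp: corner_sites_def)

lemma border_sites_subset: "border_sites \<subseteq> sites L"
  by (auto simp: border_sites_def)

lemma card_corner_sites: "card corner_sites \<le> 4"
proof -
  have "inj_on (\<lambda>x. (hc x, vc x)) corner_sites"
  proof (rule inj_onI)
    fix x x' assume "x \<in> corner_sites" "x' \<in> corner_sites" "(hc x, vc x) = (hc x', vc x')"
    then show "x = x'" by (intro sites_eqI) (simp_all add: corner_sites_def)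
  qed
  moreover have "(\<lambda>x. (hc x, vc x)) ` corner_sites \<subseteq> {1, int a} \<times> {1, int b}"
    by (auto simp: corner_sites_def)
  ultimately have "card corner_sites \<le> card ({1, int a} \<times> {1, int b})"
    by (intro card_inj_on_le) auto
  also have "\<dots> \<le> 4" by (simp add: card_cartesian_product card_insert_if)
  finally show ?thesis .
qed

lemma card_border_sites: "card border_sites \<le> 8 * L + 4"
proof -
  define K1 where "K1 = {0, 1, int a, int a + 1}"
  define K2 where "K2 = {0, 1, int b, int b + 1}"
  let ?A = "{x \<in> sites L. hc x \<in> K1}" and ?B = "{x \<in> sites L. vc x \<in> K2}"
  have K: "finite K1" "card K1 \<le> 4" "finite K2" "card K2 \<le> 4"
    using card_length[of "[0, 1, int a, int a + 1]"] card_length[of "[0, 1, int b, int b + 1]"]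
    by (simp_all add: K1_def K2_def)
  have "card border_sites \<le> card (?A \<union> ?B \<union> nbrs L z)"
    by (rule card_mono) (auto simp: border_sites_def K1_def K2_def nbrs_def)
  also have "\<dots> \<le> card ?A + card ?B + card (nbrs L z)"
    by (meson card_Un_le add_right_mono order_trans)
  also have "\<dots> \<le> 4 * L + 4 * L + 4"
  proof (intro add_mono)
    show "card ?A \<le> 4 * L" "card ?B \<le> 4 * L"
      using card_column_strip[OF K(1)] card_row_strip[OF K(3)] K(2,4) by (meson le_trans mult_le_mono1)+
    show "card (nbrs L z) \<le> 4"
      using card_length[of "[right L z, left L z, up L z, down L z]"] by (simp add: nbrs_def)
  qed
  finally show ?thesis by simp
qed

subsection \<open>Rates and the holding rate\<close>

context
  fixes h \<beta> :: real
  assumes h: "0 < h" "h < 1" and \<beta>: "0 < \<beta>"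
begin

abbreviation rate :: "site \<Rightarrow> int \<Rightarrow> real" where
  "rate x s \<equiv> R L h \<beta> \<sigma> (flip \<sigma> x s)"

lemma rate_eq:
  assumes "x \<in> sites L" "s \<in> {1, -1}" "flip \<sigma> x s = \<sigma>(x := v)"
  shows "rate x s = exp (- \<beta> * max 0 (real_of_int (4 * (v^2 - (\<sigma> x)^2)
     - 2 * (v - \<sigma> x) * (zero_nbrs L \<sigma> x - 4)) - h * real_of_int (v - \<sigma> x)))"
  using R_flip[OF assms(1,2), where h = h and \<beta> = \<beta> and \<sigma> = \<sigma>]
    H_update_diff_zero_nbrs[OF assms(1) L_ge_3 \<sigma>_nbr_values[OF assms(1)], where h = h and v = v]
  unfolding assms(3) by simp

lemma flip_minus: "\<sigma> x = -1 \<Longrightarrow> flip \<sigma> x 1 = \<sigma>(x := 0) \<and> flip \<sigma> x (-1) = \<sigma>(x := 1)"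
  by (simp add: flip_def)

lemma flip_zero: "\<sigma> x = 0 \<Longrightarrow> flip \<sigma> x 1 = \<sigma>(x := 1) \<and> flip \<sigma> x (-1) = \<sigma>(x := -1)"
  by (simp add: flip_def)

lemma rate_minus_to_zero_le:
  assumes "x \<in> sites L" "\<sigma> x = -1" "t \<le> 4 - 2 * zero_nbrs L \<sigma> x - h"
  shows "rate x 1 \<le> exp (- t * \<beta>)"
proof -
  have "rate x 1 = exp (- \<beta> * max 0 (4 - 2 * zero_nbrs L \<sigma> x - h))"
    using rate_eq[of x 1 0] flip_minus[OF assms(2)] assms(1,2) by (simp add: algebra_simps)
  then show ?thesis using exp_neg_max_le[OF \<beta> assms(3)] by simp
qed

lemma rate_minus_to_plus_le:
  assumes "x \<in> sites L" "\<sigma> x = -1" "t \<le> 16 - 4 * zero_nbrs L \<sigma> x - 2 * h"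
  shows "rate x (-1) \<le> exp (- t * \<beta>)"
proof -
  have "rate x (-1) = exp (- \<beta> * max 0 (16 - 4 * zero_nbrs L \<sigma> x - 2 * h))"
    using rate_eq[of x "-1" "1"] flip_minus[OF assms(2)] assms(1,2) by (simp add: algebra_simps)
  then show ?thesis using exp_neg_max_le[OF \<beta> assms(3)] by simp
qed

lemma rate_zero_to_plus_le:
  assumes "x \<in> sites L" "\<sigma> x = 0" "t \<le> 12 - 2 * zero_nbrs L \<sigma> x - h"
  shows "rate x 1 \<le> exp (- t * \<beta>)"
proof -
  have "rate x 1 = exp (- \<beta> * max 0 (12 - 2 * zero_nbrs L \<sigma> x - h))"
    using rate_eq[of x 1 1] flip_zero[OF assms(2)] assms(1,2) by (simp add: algebra_simps)
  then show ?thesis using exp_neg_max_le[OF \<beta> assms(3)] by simp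
qed

lemma rate_zero_to_minus_le:
  assumes "x \<in> sites L" "\<sigma> x = 0" "t \<le> 2 * zero_nbrs L \<sigma> x - 4 + h"
  shows "rate x (-1) \<le> exp (- t * \<beta>)"
proof -
  have "rate x (-1) = exp (- \<beta> * max 0 (2 * zero_nbrs L \<sigma> x - 4 + h))"
    using rate_eq[of x "-1" "-1"] flip_zero[OF assms(2)] assms(1,2) by (simp add: algebra_simps)
  then show ?thesis using exp_neg_max_le[OF \<beta> assms(3)] by simp
qed

lemma rate_z_to_minus: "rate z (-1) = 1"
proof -
  have "\<sigma> z = 0" using \<sigma>_eq[OF z(1)] by simp
  then show ?thesis
    using rate_eq[of z "-1" "-1"] flip_zero z(1) zero_nbrs_z h exp_neg_max_nonpos by simp
qed

lemma rate_w_to_zero: "rate w 1 = 1"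
  using rate_eq[of w 1 0] flip_minus w zero_nbrs_z w_facts(3) h exp_neg_max_nonpos by simp

abbreviation e_h :: real where "e_h \<equiv> exp (- h * \<beta>)"
abbreviation e_2h :: real where "e_2h \<equiv> exp (- (2 - h) * \<beta>)"
abbreviation e_4h :: real where "e_4h \<equiv> exp (- (4 - h) * \<beta>)"

lemma barriers_ordered: "0 \<le> e_4h" "e_4h \<le> e_2h" "e_2h \<le> e_h"
  using exp_barriers_ordered[of h \<beta>] h \<beta> by auto

lemma site_rate_z: "rate z 1 + rate z (-1) \<le> 1 + e_4h"
proof -
  have "rate z 1 \<le> e_4h"
    using rate_zero_to_plus_le[of z "4 - h"] z(1) \<sigma>_eq[OF z(1)] zero_nbrs_z by simp
  then show ?thesis using rate_z_to_minus by simp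
qed

lemma site_rate_w: "rate w 1 + rate w (-1) \<le> 1 + e_4h"
proof -
  have "rate w (-1) \<le> e_4h"
    using rate_minus_to_plus_le[of w "4 - h"] w(1,2) w_facts(3) h by simp
  then show ?thesis using rate_w_to_zero by simp
qed

lemma site_rate_outside:
  assumes x: "x \<in> sites L" "\<not> inside x" "x \<noteq> z" "x \<noteq> w"
  shows "rate x 1 + rate x (-1) \<le> e_2h + e_4h"
    and "x \<notin> border_sites \<Longrightarrow> rate x 1 + rate x (-1) \<le> e_4h + e_4h"
proof -
  have \<sigma>x: "\<sigma> x = -1" using \<sigma>_eq[OF x(1)] x(2,3) by simp
  have k: "zero_nbrs L \<sigma> x \<le> 1" using zero_nbrs_outside[OF x(1,2,4)] .
  have "rate x (-1) \<le> e_4h" using rate_minus_to_plus_le[OF x(1) \<sigma>x, of "4 - h"] k h by simp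
  moreover have "rate x 1 \<le> e_2h" using rate_minus_to_zero_le[OF x(1) \<sigma>x, of "2 - h"] k by simp
  moreover have "rate x 1 \<le> e_4h" if "x \<notin> border_sites"
  proof -
    have "zero_nbrs L \<sigma> x = 0" using that x zero_nbrs_far[OF x(1,2)] by (simp add: border_sites_def)
    then show ?thesis using rate_minus_to_zero_le[OF x(1) \<sigma>x, of "4 - h"] by simp
  qed
  ultimately show "rate x 1 + rate x (-1) \<le> e_2h + e_4h"
    and "x \<notin> border_sites \<Longrightarrow> rate x 1 + rate x (-1) \<le> e_4h + e_4h" by auto
qed

lemma site_rate_inside:
  assumes x: "x \<in> sites L" "inside x"
  shows "rate x 1 + rate x (-1) \<le> e_h + e_4h"
    and "x \<notin> corner_sites \<Longrightarrow> rate x 1 + rate x (-1) \<le> e_2h + e_4h"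
    and "x \<notin> border_sites \<Longrightarrow> rate x 1 + rate x (-1) \<le> e_4h + e_4h"
proof -
  have \<sigma>x: "\<sigma> x = 0" using \<sigma>_eq[OF x(1)] x(2) by simp
  note k = zero_nbrs_inside[OF x] zero_nbrs_bounds[of L \<sigma> x]
  have "rate x 1 \<le> e_4h" using rate_zero_to_plus_le[OF x(1) \<sigma>x, of "4 - h"] k by simp
  moreover have "rate x (-1) \<le> e_h" using rate_zero_to_minus_le[OF x(1) \<sigma>x, of h] k by simp
  moreover have "rate x (-1) \<le> e_2h" if "x \<notin> corner_sites"
    using rate_zero_to_minus_le[OF x(1) \<sigma>x, of "2 - h"] k(2) that x(1) h by (simp add: corner_sites_def)
  moreover have "rate x (-1) \<le> e_4h" if "x \<notin> border_sites"
    using rate_zero_to_minus_le[OF x(1) \<sigma>x, of "4 - h"] k(3) that x(1) h by (simp add: border_sites_def)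
  ultimately show "rate x 1 + rate x (-1) \<le> e_h + e_4h"
    and "x \<notin> corner_sites \<Longrightarrow> rate x 1 + rate x (-1) \<le> e_2h + e_4h"
    and "x \<notin> border_sites \<Longrightarrow> rate x 1 + rate x (-1) \<le> e_4h + e_4h" by auto
qed

lemma site_rate_le:
  assumes x: "x \<in> sites L"
  shows "rate x 1 + rate x (-1) \<le> of_bool (x \<in> {z, w}) + 2 * e_4h
     + of_bool (x \<in> corner_sites) * e_h + of_bool (x \<in> border_sites) * (2 * e_2h)"
proof -
  have e: "0 \<le> e_4h" "0 \<le> e_2h" "0 \<le> e_h" by simp_all
  consider "x = z" | "x = w" | "\<not> inside x" "x \<noteq> z" "x \<noteq> w" | "inside x" "x \<noteq> z" "x \<noteq> w"
    by blast
  then show ?thesis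
  proof cases
    case 1
    then show ?thesis using site_rate_z e
      by (auto simp: of_bool_def simp del: exp_ge_zero)
  next
    case 2
    then show ?thesis using site_rate_w e
      by (auto simp: of_bool_def simp del: exp_ge_zero)
  next
    case 3
    then show ?thesis using site_rate_outside[OF x 3] e
      by (auto simp: of_bool_def simp del: exp_ge_zero)
  next
    case 4
    then show ?thesis using site_rate_inside[OF x 4(1)] e
      by (auto simp: of_bool_def simp del: exp_ge_zero)
  qed
qed

lemma holding_rate_eq: "holding_rate L h \<beta> \<sigma> = (\<Sum>x\<in>sites L. rate x 1 + rate x (-1))"
  by (simp add: holding_rate_def)

lemma holding_rate_le: "holding_rate L h \<beta> \<sigma> \<le> 2 + 2 * real (L * L) * e_4h + 4 * e_h + 2 * real (8 * L + 4) * e_2h"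
proof -
  have zw_sites: "sites L \<inter> {x. x \<in> {z, w}} = {z, w}" using z(1) w(1) by auto
  have zw: "(\<Sum>x\<in>sites L. of_bool (x \<in> {z, w})) = (2::real)"
    by (simp only: sum_of_bool_eq[OF finite_sites finite_sites] zw_sites) (use w_facts(2) in auto)
  have corner: "(\<Sum>x\<in>sites L. of_bool (x \<in> corner_sites) * e_h) = real (card corner_sites) * e_h"
    using corner_sites_subset by (simp add: Int_absorb1)
  have border: "(\<Sum>x\<in>sites L. of_bool (x \<in> border_sites) * (2 * e_2h)) = real (card border_sites) * (2 * e_2h)"
    using border_sites_subset by (simp add: Int_absorb1)
  have "holding_rate L h \<beta> \<sigma> \<le> (\<Sum>x\<in>sites L. of_bool (x \<in> {z, w}) + 2 * e_4h
     + of_bool (x \<in> corner_sites) * e_h + of_bool (x \<in> border_sites) * (2 * e_2h))"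
    unfolding holding_rate_eq by (rule sum_mono) (rule site_rate_le)
  also have "\<dots> = 2 + 2 * real (L * L) * e_4h + real (card corner_sites) * e_h + real (card border_sites) * (2 * e_2h)"
    by (simp only: sum.distrib zw corner border) (simp add: card_sites)
  also have "\<dots> \<le> 2 + 2 * real (L * L) * e_4h + 4 * e_h + 2 * real (8 * L + 4) * e_2h"
    using card_corner_sites card_border_sites barriers_ordered
    by (intro add_mono mult_right_mono order.refl) auto
  finally show ?thesis .
qed

lemma holding_rate_ge: "2 \<le> holding_rate L h \<beta> \<sigma>"
proof -
  have nonneg_rate: "0 \<le> rate x s" for x s by (simp add: R_def)
  then have nonneg: "0 \<le> rate x 1 + rate x (-1)" for x by (simp add: add_nonneg_nonneg)
  have "rate z 1 + rate z (-1) + (rate w 1 + rate w (-1)) = (\<Sum>x\<in>{z, w}. rate x 1 + rate x (-1))"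
    using w_facts(2) by simp
  also have "\<dots> \<le> holding_rate L h \<beta> \<sigma>"
    unfolding holding_rate_eq using z(1) w(1) nonneg by (intro sum_mono2) auto
  finally show ?thesis using rate_z_to_minus rate_w_to_zero nonneg_rate[of z 1] nonneg_rate[of w "-1"] by linarith
qed

lemma jump_prob_eq:
  "p L h \<beta> \<sigma> (\<sigma>(z := -1)) = 1 / holding_rate L h \<beta> \<sigma>"
  "p L h \<beta> \<sigma> (\<sigma>(w := 0)) = 1 / holding_rate L h \<beta> \<sigma>"
  using rate_z_to_minus rate_w_to_zero flip_zero[of z] flip_minus[OF w(2)] \<sigma>_eq[OF z(1)]
  by (simp_all add: p_def)

lemma delta1_eq: "delta1 L h \<beta> = e_h + real L * e_2h + real L * real L * e_4h"
  by (simp add: delta1_def card_sites real_sqrt_mult_self)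

lemma jump_probs_near_half:
  "\<bar>p L h \<beta> \<sigma> (\<sigma>(z := -1)) - 1/2\<bar> \<le> 5 * delta1 L h \<beta>
   \<and> \<bar>p L h \<beta> \<sigma> (\<sigma>(w := 0)) - 1/2\<bar> \<le> 5 * delta1 L h \<beta>"
proof -
  let ?S = "holding_rate L h \<beta> \<sigma>"
  have "\<bar>1 / ?S - 1/2\<bar> \<le> (?S - 2) / 4"
    using abs_inverse_minus_half_le[OF holding_rate_ge] .
  also have "\<dots> \<le> 5 * delta1 L h \<beta>"
  proof -
    have "2 * real (8 * L + 4) * e_2h \<le> 20 * (real L * e_2h)"
      using L_ge_3 by (simp add: mult_right_mono)
    moreover have "2 * real (L * L) * e_4h \<le> 20 * (real L * real L * e_4h)" "4 * e_h \<le> 20 * e_h"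
      by simp_all
    ultimately show ?thesis using holding_rate_le unfolding delta1_eq by argo
  qed
  finally show ?thesis unfolding jump_prob_eq by simp
qed

end

end

lemma droplet_of_rectangle_orientations:
  assumes "2 \<le> m" "m \<le> n" "n + 3 \<le> L"
    and "Q = rect L c n m \<or> Q = rect L c m n" "z \<in> sites L" "z \<notin> Q"
    and "\<forall>x\<in>sites L. \<sigma> x = (if x \<in> Q \<or> x = z then 0 else -1)"
    and "nbrs L z \<inter> Q = {y}" "y \<in> (if Q = rect L c n m then corners L c n m else corners L c m n)"
    and "w \<in> sites L" "\<sigma> w = -1" "card {y \<in> nbrs L w. \<sigma> y = 0} = 2"
  shows "droplet L n m c z y w \<sigma> \<or> droplet L m n c z y w \<sigma>"
proof (cases "Q = rect L c n m")
  case True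
  then have "droplet L n m c z y w \<sigma>" using assms by unfold_locales auto
  then show ?thesis ..
next
  case False
  then have "droplet L m n c z y w \<sigma>" using assms by unfold_locales auto
  then show ?thesis ..
qed

theorem mainTheorem16:
  fixes h :: real
  assumes "0 < h" "h < 1" "2 / h \<notin> \<int>"
  shows "\<exists>C0::real. \<forall>(L::nat) (n::nat) (m::nat) (\<beta>::real) (\<sigma>::config) (c::site) (Q::site set) (z::site) (w::site).
     nat \<lfloor>2 / h\<rfloor> \<le> m \<and> m \<le> n \<and> n + 3 \<le> L \<and> 0 < \<beta> \<and>
     \<sigma> \<in> Omega L \<and> c \<in> sites L \<and>
     (Q = rect L c n m \<or> Q = rect L c m n) \<and>
     z \<in> sites L \<and> z \<notin> Q \<and>
     (\<forall>x\<in>sites L. \<sigma> x = (if x \<in> Q \<or> x = z then 0 else -1)) \<and>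
     (\<exists>y. nbrs L z \<inter> Q = {y} \<and>
        y \<in> (if Q = rect L c n m then corners L c n m else corners L c m n)) \<and>
     w \<in> sites L \<and> \<sigma> w = -1 \<and> card {y \<in> nbrs L w. \<sigma> y = 0} = 2
     \<longrightarrow> \<bar>p L h \<beta> \<sigma> (\<sigma>(z := -1)) - 1/2\<bar> \<le> C0 * delta1 L h \<beta>
       \<and> \<bar>p L h \<beta> \<sigma> (\<sigma>(w := 0)) - 1/2\<bar> \<le> C0 * delta1 L h \<beta>"
proof -
  have "2 < 2 / h" using assms(1,2) by (simp add: field_simps)
  then have m_ge_2: "2 \<le> nat \<lfloor>2 / h\<rfloor>" by linarith
  show ?thesis
    by (intro exI[of _ 5] allI impI, elim conjE exE)
       (smt (verit) le_trans m_ge_2 droplet_of_rectangle_orientations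
         droplet.jump_probs_near_half[OF _ assms(1,2)])
qed

end
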